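(* Let $d\ge2$ and let $N_1,\dots,N_d,s$ be positive integers with $\min_{1\le i\le d}N_i>s\ge2$. Let $X\subseteq[N_1]\times\cdots\times[N_d]$, $\lambda_0\in(0,\frac1{s-1})$, and let $B\subseteq[-\frac{N_1}{s-1},\frac{N_1}{s-1}]\times\cdots\times[-\frac{N_d}{s-1},\frac{N_d}{s-1}]$ be a set of nonzero integer points such that every $(b_1,\dots,b_d)\in B$ satisfies $\lambda_0\le\max_{1\le i\le d}\frac{|b_i|}{\gcd(b_1,\dots,b_d)N_i}$. Let $\mathbf{b}\in B$, let $f_{\mathbf{b}}:\mathbb{Z}^d\to\mathbb{Z}^{d-1}$ be a map of the form $f_{\mathbf{b}}(\mathbf{x})=M\mathbf{x}+\mathbf{v}$ ($M\in\mathbb{Z}^{(d-1)\times d}$, $\mathbf{v}\in\mathbb{Z}^{d-1}$) such that for all $\mathbf{x}_1,\mathbf{x}_2\in\mathbb{Z}^d$, $f_{\mathbf{b}}(\mathbf{x}_1)=f_{\mathbf{b}}(\mathbf{x}_2)$ iff $\mathbf{x}_1-\mathbf{x}_2=k\mathbf{b}$ for some $k\in\mathbb{Q}$, and let $s^*\le s$ be a positive integer. Then \[ \sum_{\mathbf{b}'\in B}|U^d(X,\mathbf{b},s)\cap U^d(X,\mathbf{b}',s)|\le\frac{4}{s\lambda_0}|U^d(X,\mathbf{b},s)|+\frac{s^*-1}{s}\sum_{\mathbf{b}'\in B}|U^d(X,\mathbf{b}',s)|+\frac{12}{s\lambda_0^2}\sum_{\mathbf{b}^*\in\mathbb{Z}^{d-1}\setminus\{\mathbf{0}\}}|U^{d-1}(f_{\mathbf{b}}(U^d(X,\mathbf{b},s)),\mathbf{b}^*,s^*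 )|. \]
   Context: $[N]=\{1,\dots,N\}$. For $n\ge1$, a finite set $Y\subseteq\mathbb{Z}^n$, $\mathbf{c}\in\mathbb{Z}^n\setminus\{\mathbf{0}\}$ and a positive integer $r$: points $\mathbf{y},\mathbf{y}'$ are congruent mod $\mathbf{c}$ if $\mathbf{y}-\mathbf{y}'\in\mathbb{Z}\mathbf{c}$, and $U^n(Y,\mathbf{c},r)$ is the set of $\mathbf{y}\in Y$ with $|\{\mathbf{y}'\in Y:\mathbf{y}'\equiv\mathbf{y}\pmod{\mathbf{c}}\}|\ge r$. *)

theory Defs
  imports "HOL-Analysis.Analysis"
begin

text \<open>Integer vectors in Z^n are represented as int lists of length n.\<close>

definition intvecs :: "nat \<Rightarrow> int list set" where
  "intvecs n = {x. length x = n}"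

definition congr_mod :: "int list \<Rightarrow> int list \<Rightarrow> int list \<Rightarrow> bool" where
  "congr_mod c y y' \<longleftrightarrow> length y = length c \<and> length y' = length c \<and>
     (\<exists>k::int. \<forall>i<length c. y ! i - y' ! i = k * c ! i)"

text \<open>U^n(Y,c,r); the dimension n is implicit in the length of the vectors.\<close>
definition U :: "int list set \<Rightarrow> int list \<Rightarrow> nat \<Rightarrow> int list set" where
  "U Y c r = {y \<in> Y. r \<le> card {y' \<in> Y. congr_mod c y' y}}"

definition affmap :: "nat \<Rightarrow> (nat \<Rightarrow> nat \<Rightarrow> int) \<Rightarrow> (nat \<Rightarrow> int) \<Rightarrow> int list \<Rightarrow> int list" where
  "affmap d M v x = map (\<lambda>j. (\<Sum>i<d. M j i * x ! i) + v j) [0..<d - 1]"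

end

theory Submission
  imports Defs
begin

(* Write U = U(X,b,s) and pick a coordinate i attaining the maximum in the hypothesis on b, so
   that a = |b_i| / gcd(b) >= lambda_0 N_i. The fibres of f_b are the lines x + Q b, and an
   integer vector on such a line is an integer multiple of the primitive vector b / gcd(b).
   Hence on a fibre the i-th coordinate is injective with values spaced by a: a fibre meets the
   box in at most N_i/a + 1 points, and at most 2 N_i/((s-1) a) + 1 directions b' in B share
   the value c = M b' (at most 2 N_i/((s-1) a) for c = 0, the directions parallel to b).
   Parallel directions contribute at most |U| each. For any other b', f_b is injective on
   b'-classes and maps them into (M b')-classes, so a point of U in U(X,b',s) is either mapped
   into U^{d-1}(f_b(U), M b', s'), which costs the fibre size, or lies in a b'-class with fewer
   than s' points of U; as the b'-classes in U(X,b',s) have at least s points, double counting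
   bounds the latter by (s'-1)/s |U(X,b',s)|. Summing over b', grouping by c = M b' and using
   lambda_0 (s-1) < 1 to absorb the constants gives the bound. *)

lemma Gcd_mult_Ints:
  fixes k :: "'a :: comm_ring_1"
  assumes "finite S" "\<And>x. x \<in> S \<Longrightarrow> k * of_int x \<in> \<int>"
  shows "k * of_int (Gcd S) \<in> \<int>"
  using assms
proof (induction S rule: finite_induct)
  case empty
  then show ?case by simp
next
  case (insert x S)
  obtain u w where "u * x + w * Gcd S = gcd x (Gcd S)"
    using bezout_int by blast
  then have "k * of_int (Gcd (insert x S)) = of_int u * (k * of_int x) + of_int w * (k * of_int (Gcd S))"
    by (simp flip: \<open>u * x + w * Gcd S = gcd x (Gcd S)\<close> add: algebra_simps)
  also have "\<dots> \<in> \<int>"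
    using insert by (blast intro: Ints_add Ints_mult Ints_of_int)
  finally show ?case .
qed

lemma int_vector_on_rat_line:
  fixes k :: rat and x :: "nat \<Rightarrow> int" and b :: "int list"
  assumes on_line: "\<And>j. j < length b \<Longrightarrow> of_int (x j) = k * of_int (b ! j)"
  obtains t :: int where "\<And>j. j < length b \<Longrightarrow> x j = t * (b ! j div Gcd (set b))"
proof -
  have "k * of_int (Gcd (set b)) \<in> \<int>"
    by (rule Gcd_mult_Ints) (auto simp: in_set_conv_nth simp flip: on_line)
  then obtain t where t: "k * of_int (Gcd (set b)) = of_int t"
    by (elim Ints_cases)
  have "x j = t * (b ! j div Gcd (set b))" if "j < length b" for j
  proof -
    have "Gcd (set b) * (b ! j div Gcd (set b)) = b ! j"
      using that by (simp add: Gcd_dvd)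
    then have "(of_int (x j) :: rat) = of_int t * of_int (b ! j div Gcd (set b))"
      using on_line[OF that] t by (metis mult.assoc of_int_mult)
    then show ?thesis
      by (metis of_int_eq_iff of_int_mult)
  qed
  then show ?thesis
    by (rule that)
qed

lemma card_le_of_pairwise_dvd:
  fixes S :: "int set" and a :: int and lo hi :: real
  assumes "finite S" "0 < a" "\<And>x y. x \<in> S \<Longrightarrow> y \<in> S \<Longrightarrow> a dvd x - y"
    and "\<And>x. x \<in> S \<Longrightarrow> lo \<le> of_int x \<and> of_int x \<le> hi" "lo \<le> hi"
  shows "real (card S) \<le> (hi - lo) / of_int a + 1"
proof (cases "S = {}")
  case True
  then show ?thesis
    using assms by simp
next
  case False
  define m where "m = Min S"
  define F where "F = \<lfloor>(hi - lo) / a\<rfloor>"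
  have m: "m \<in> S" "\<And>x. x \<in> S \<Longrightarrow> m \<le> x"
    using assms(1) False by (simp_all add: m_def)
  have "S \<subseteq> (\<lambda>z. m + a * z) ` {0..F}"
  proof
    fix x
    assume "x \<in> S"
    then obtain z where z: "x - m = a * z"
      using assms(3) m(1) by (meson dvdE)
    have "0 \<le> a * z"
      using m(2)[OF \<open>x \<in> S\<close>] z by linarith
    then have "0 \<le> z"
      using \<open>0 < a\<close> by (simp add: zero_le_mult_iff)
    have "of_int a * of_int z \<le> hi - lo"
      using assms(4) \<open>x \<in> S\<close> m(1) z by (metis of_int_diff of_int_mult diff_mono)
    then have "z \<le> F"
      using \<open>0 < a\<close> by (simp add: F_def le_floor_iff field_simps mult.commute)
    then show "x \<in> (\<lambda>z. m + a * z) ` {0..F}"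
      using \<open>0 \<le> z\<close> z by (intro image_eqI[of _ _ z]) auto
  qed
  then have "card S \<le> card {0..F}"
    by (metis card_image_le card_mono finite_atLeastAtMost_int finite_imageI le_trans)
  moreover have "0 \<le> F"
    using assms(2,5) by (simp add: F_def)
  ultimately have "real (card S) \<le> real (nat (F + 1))"
    by simp
  also have "\<dots> = of_int F + 1"
    using \<open>0 \<le> F\<close> by simp
  finally have "real (card S) \<le> of_int F + 1" .
  then show ?thesis
    using of_int_floor_le[of "(hi - lo) / a"] unfolding F_def by linarith
qed

lemma Gcd_div_nonzero:
  fixes b :: "int list"
  assumes "i < length b" "b ! i \<noteq> 0"
  shows "b ! i div Gcd (set b) \<noteq> 0"
proof -
  have "Gcd (set b) dvd b ! i"
    using assms(1) by (simp add: Gcd_dvd)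
  then show ?thesis
    using assms(2) by (metis dvd_mult_div_cancel mult_zero_right)
qed

lemma congr_mod_sym: "congr_mod c y y' \<Longrightarrow> congr_mod c y' y"
  unfolding congr_mod_def by (metis minus_diff_eq mult_minus_left)

lemma congr_mod_trans: "congr_mod c x y \<Longrightarrow> congr_mod c y z \<Longrightarrow> congr_mod c x z"
proof -
  assume "congr_mod c x y" "congr_mod c y z"
  then obtain k l where "\<forall>i<length c. x ! i - y ! i = k * c ! i" "\<forall>i<length c. y ! i - z ! i = l * c ! i"
    and "length x = length c" "length z = length c"
    unfolding congr_mod_def by blast
  then show "congr_mod c x z"
    unfolding congr_mod_def by (intro conjI exI[of _ "k + l"]) (auto simp: algebra_simps)
qed

lemma congr_class_subset_U:
  assumes "y \<in> U X c s" "y' \<in> X" "congr_mod c y' y"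
  shows "y' \<in> U X c s"
proof -
  have "{x \<in> X. congr_mod c x y'} = {x \<in> X. congr_mod c x y}"
    using assms(3) congr_mod_sym congr_mod_trans by blast
  then show ?thesis
    using assms unfolding U_def by simp
qed

lemma card_subset_U_le:
  assumes "finite X" "A \<subseteq> U X c s"
    and "\<And>x. x \<in> U X c s \<Longrightarrow> card {y \<in> A. congr_mod c y x} \<le> m"
  shows "s * card A \<le> m * card (U X c s)"
proof -
  have fin: "finite (U X c s)" "finite A"
    using assms(1,2) finite_subset[OF assms(2)] unfolding U_def by auto
  have "s * card A = (\<Sum>y\<in>A. s)"
    by simp
  also have "\<dots> \<le> (\<Sum>y\<in>A. card {x \<in> X. congr_mod c x y})"
    using assms(2) by (intro sum_mono) (auto simp: U_def)
  also have "\<dots> = (\<Sum>y\<in>A. card {x \<in> U X c s. congr_mod c x y})"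
    using assms(2) congr_class_subset_U by (intro sum.cong arg_cong[where f = card]) (auto simp: U_def)
  also have "\<dots> = (\<Sum>x\<in>U X c s. card {y \<in> A. congr_mod c x y})"
    using sum.swap_restrict[OF fin(2,1), of "\<lambda>_ _. 1::nat"] by simp
  also have "\<dots> \<le> (\<Sum>x\<in>U X c s. m)"
    using assms(3) congr_mod_sym by (intro sum_mono) (metis (no_types, lifting) Collect_cong)
  finally show ?thesis
    by (simp add: mult.commute)
qed

lemma sum_comp_le_mult_sum_image:
  fixes f :: "'b \<Rightarrow> real"
  assumes "finite S" "\<And>y. 0 \<le> f y" "\<And>y. y \<in> g ` S \<Longrightarrow> real (card {x \<in> S. g x = y}) \<le> R"
  shows "(\<Sum>x\<in>S. f (g x)) \<le> R * (\<Sum>y\<in>g ` S. f y)"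
proof -
  have "(\<Sum>x\<in>S. f (g x)) = (\<Sum>y\<in>g ` S. real (card {x \<in> S. g x = y}) * f y)"
    using sum.image_gen[OF assms(1), of "\<lambda>x. f (g x)" g] by simp
  also have "\<dots> \<le> (\<Sum>y\<in>g ` S. R * f y)"
    using assms(2,3) by (intro sum_mono mult_right_mono) auto
  finally show ?thesis
    by (simp add: sum_distrib_left)
qed

lemma card_preimage_le_mult_card:
  fixes K :: real
  assumes "finite A" "finite Z" and fibres: "\<And>z. real (card {y \<in> A. f y = z}) \<le> K"
  shows "real (card {y \<in> A. f y \<in> Z}) \<le> K * real (card Z)"
proof -
  have "real (card {x \<in> {y \<in> A. f y \<in> Z}. f x = z}) \<le> K" for z
  proof -
    have "card {x \<in> {y \<in> A. f y \<in> Z}. f x = z} \<le> card {y \<in> A. f y = z}"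
      using assms(1) by (intro card_mono) auto
    then show ?thesis
      using fibres[of z] by linarith
  qed
  then have "real (card {y \<in> A. f y \<in> Z}) \<le> K * real (card (f ` {y \<in> A. f y \<in> Z}))"
    using sum_comp_le_mult_sum_image[of "{y \<in> A. f y \<in> Z}" "\<lambda>_. 1" f K] assms(1) by simp
  also have "\<dots> \<le> K * real (card Z)"
  proof -
    have "0 \<le> K"
      using fibres[of undefined] of_nat_0_le_iff[of "card {y \<in> A. f y = undefined}"] by linarith
    then show ?thesis
      using assms(2) by (intro mult_left_mono of_nat_mono card_mono) auto
  qed
  finally show ?thesis .
qed

lemma image_in_U_of_congr_class:
  fixes f :: "int list \<Rightarrow> int list"
  assumes "finite A" "E \<subseteq> A" "A \<subseteq> X" "s' \<le> card E" "y0 \<in> E"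
    and E_congr: "\<And>y1 y2. y1 \<in> E \<Longrightarrow> y2 \<in> E \<Longrightarrow> congr_mod b' y1 y2"
    and f_congr: "\<And>y1 y2. y1 \<in> X \<Longrightarrow> y2 \<in> X \<Longrightarrow> congr_mod b' y1 y2 \<Longrightarrow> congr_mod c (f y1) (f y2)"
    and f_inj: "\<And>y1 y2. y1 \<in> X \<Longrightarrow> y2 \<in> X \<Longrightarrow> congr_mod b' y1 y2 \<Longrightarrow> f y1 = f y2 \<Longrightarrow> y1 = y2"
  shows "f y0 \<in> U (f ` A) c s'"
proof -
  have "E \<subseteq> X"
    using assms(2,3) by blast
  then have "inj_on f E"
    using f_inj E_congr by (meson inj_onI subsetD)
  have "f ` E \<subseteq> {z \<in> f ` A. congr_mod c z (f y0)}"
  proof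
    fix z
    assume "z \<in> f ` E"
    then obtain y where "y \<in> E" "z = f y"
      by blast
    then show "z \<in> {z \<in> f ` A. congr_mod c z (f y0)}"
      using f_congr[of y y0] E_congr[of y y0] \<open>E \<subseteq> X\<close> assms(2,5) by auto
  qed
  then have "card (f ` E) \<le> card {z \<in> f ` A. congr_mod c z (f y0)}"
    using assms(1) by (intro card_mono) auto
  then have "s' \<le> card {z \<in> f ` A. congr_mod c z (f y0)}"
    using assms(4) \<open>inj_on f E\<close> by (simp add: card_image)
  then show ?thesis
    using assms(2,5) unfolding U_def by auto
qed

lemma card_outside_image_U_le:
  fixes f :: "int list \<Rightarrow> int list"
  assumes "finite X" "A \<subseteq> X" "1 \<le> s'"
    and f_congr: "\<And>y1 y2. y1 \<in> X \<Longrightarrow> y2 \<in> X \<Longrightarrow> congr_mod b' y1 y2 \<Longrightarrow> congr_mod c (f y1) (f y2)"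
    and f_inj: "\<And>y1 y2. y1 \<in> X \<Longrightarrow> y2 \<in> X \<Longrightarrow> congr_mod b' y1 y2 \<Longrightarrow> f y1 = f y2 \<Longrightarrow> y1 = y2"
  shows "s * card {y \<in> A \<inter> U X b' s. f y \<notin> U (f ` A) c s'} \<le> (s' - 1) * card (U X b' s)"
proof (rule card_subset_U_le[OF assms(1)])
  define A' where "A' = {y \<in> A \<inter> U X b' s. f y \<notin> U (f ` A) c s'}"
  show "A' \<subseteq> U X b' s"
    by (auto simp: A'_def)
  fix x
  define E where "E = {y \<in> A'. congr_mod b' y x}"
  show "card E \<le> s' - 1"
  proof (rule ccontr)
    assume "\<not> card E \<le> s' - 1"
    then have "s' \<le> card E"
      by simp
    then obtain y0 where "y0 \<in> E"
      using \<open>1 \<le> s'\<close> by fastforce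
    have "f y0 \<in> U (f ` A) c s'"
    proof (rule image_in_U_of_congr_class[OF _ _ assms(2) \<open>s' \<le> card E\<close> \<open>y0 \<in> E\<close> _ f_congr f_inj])
      show "finite A"
        using assms(1,2) finite_subset by blast
      show "E \<subseteq> A"
        by (auto simp: E_def A'_def)
      show "congr_mod b' y1 y2" if "y1 \<in> E" "y2 \<in> E" for y1 y2
        using that congr_mod_sym congr_mod_trans unfolding E_def by blast
    qed
    then show False
      using \<open>y0 \<in> E\<close> by (simp add: E_def A'_def)
  qed
qed

lemma card_inter_U_le:
  fixes f :: "int list \<Rightarrow> int list" and K :: real
  assumes "finite X" "A \<subseteq> X" "0 < s" "1 \<le> s'"
    and f_congr: "\<And>y1 y2. y1 \<in> X \<Longrightarrow> y2 \<in> X \<Longrightarrow> congr_mod b' y1 y2 \<Longrightarrow> congr_mod c (f y1) (f y2)"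
    and f_inj: "\<And>y1 y2. y1 \<in> X \<Longrightarrow> y2 \<in> X \<Longrightarrow> congr_mod b' y1 y2 \<Longrightarrow> f y1 = f y2 \<Longrightarrow> y1 = y2"
    and fibres: "\<And>z. real (card {y \<in> A. f y = z}) \<le> K"
  shows "real (card (A \<inter> U X b' s))
    \<le> (real s' - 1) / real s * real (card (U X b' s)) + K * real (card (U (f ` A) c s'))"
proof -
  define Z where "Z = U (f ` A) c s'"
  define A' where "A' = {y \<in> A \<inter> U X b' s. f y \<notin> Z}"
  have "finite A"
    using assms(1,2) finite_subset by blast
  have "card (A \<inter> U X b' s) \<le> card ({y \<in> A. f y \<in> Z} \<union> A')"
    using \<open>finite A\<close> by (intro card_mono) (auto simp: A'_def)
  also have "\<dots> \<le> card {y \<in> A. f y \<in> Z} + card A'"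
    by (rule card_Un_le)
  finally have "real (card (A \<inter> U X b' s)) \<le> real (card {y \<in> A. f y \<in> Z}) + real (card A')"
    by linarith
  moreover have "real (card {y \<in> A. f y \<in> Z}) \<le> K * real (card Z)"
  proof (rule card_preimage_le_mult_card[OF \<open>finite A\<close> _ fibres])
    show "finite Z"
      using \<open>finite A\<close> by (simp add: Z_def U_def)
  qed
  moreover have "real (card A') \<le> (real s' - 1) / real s * real (card (U X b' s))"
  proof -
    have "s * card A' \<le> (s' - 1) * card (U X b' s)"
      unfolding A'_def Z_def by (rule card_outside_image_U_le[OF assms(1,2,4) f_congr f_inj])
    then have "real s * real (card A') \<le> real (s' - 1) * real (card (U X b' s))"
      by (simp only: of_nat_mult[symmetric] of_nat_le_iff)
    then show ?thesis
      using \<open>0 < s\<close> \<open>1 \<le> s'\<close> by (simp add: field_simps of_nat_diff)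
  qed
  ultimately show ?thesis
    unfolding Z_def by linarith
qed

lemma sum_card_inter_le:
  fixes g :: "'b \<Rightarrow> 'c" and V :: "'b \<Rightarrow> 'a set" and W :: "'c \<Rightarrow> nat" and \<alpha> K R :: real
  assumes "finite B" "finite A" "0 \<le> \<alpha>" "0 \<le> K"
    and off_z_bound: "\<And>b'. b' \<in> B \<Longrightarrow> g b' \<noteq> z \<Longrightarrow>
      real (card (A \<inter> V b')) \<le> \<alpha> * real (card (V b')) + K * real (W (g b'))"
    and multiplicity: "\<And>c. real (card {b' \<in> B. g b' = c}) \<le> R"
  shows "(\<Sum>b'\<in>B. real (card (A \<inter> V b')))
    \<le> real (card {b' \<in> B. g b' = z}) * real (card A) + \<alpha> * (\<Sum>b'\<in>B. real (card (V b')))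
      + K * R * (\<Sum>c\<in>g ` B - {z}. real (W c))"
proof -
  define B0 where "B0 = {b' \<in> B. g b' = z}"
  have "(\<Sum>b'\<in>B0. real (card (A \<inter> V b'))) \<le> real (card B0) * real (card A)"
  proof (rule sum_bounded_above)
    show "real (card (A \<inter> V b')) \<le> real (card A)" for b'
      using \<open>finite A\<close> by (simp add: card_mono)
  qed
  moreover have "(\<Sum>b'\<in>B - B0. real (card (A \<inter> V b')))
      \<le> (\<Sum>b'\<in>B - B0. \<alpha> * real (card (V b')) + K * real (W (g b')))"
    using off_z_bound by (intro sum_mono) (auto simp: B0_def)
  moreover have "\<alpha> * (\<Sum>b'\<in>B - B0. real (card (V b'))) \<le> \<alpha> * (\<Sum>b'\<in>B. real (card (V b')))"
    by (rule mult_left_mono[OF sum_mono2]) (use assms(1,3) in auto)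
  moreover have "K * (\<Sum>b'\<in>B - B0. real (W (g b'))) \<le> K * (R * (\<Sum>c\<in>g ` B - {z}. real (W c)))"
  proof -
    have "real (card {x \<in> B - B0. g x = c}) \<le> R" for c
    proof -
      have "real (card {x \<in> B - B0. g x = c}) \<le> real (card {b' \<in> B. g b' = c})"
        using assms(1) by (intro of_nat_mono card_mono) auto
      then show ?thesis
        using multiplicity[of c] by linarith
    qed
    then have "(\<Sum>b'\<in>B - B0. real (W (g b'))) \<le> R * (\<Sum>c\<in>g ` (B - B0). real (W c))"
      using assms(1) by (intro sum_comp_le_mult_sum_image) auto
    also have "g ` (B - B0) = g ` B - {z}"
      by (auto simp: B0_def)
    finally show ?thesis
      using assms(4) by (rule mult_left_mono)
  qed
  moreover have "(\<Sum>b'\<in>B. real (card (A \<inter> V b')))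
      = (\<Sum>b'\<in>B - B0. real (card (A \<inter> V b'))) + (\<Sum>b'\<in>B0. real (card (A \<inter> V b')))"
    using assms(1) by (intro sum.subset_diff) (auto simp: B0_def)
  ultimately show ?thesis
    by (simp add: B0_def sum.distrib sum_distrib_left mult.assoc)
qed

abbreviation linmap :: "nat \<Rightarrow> (nat \<Rightarrow> nat \<Rightarrow> int) \<Rightarrow> int list \<Rightarrow> int list" where
  "linmap d M \<equiv> affmap d M (\<lambda>_. 0)"

lemma length_affmap [simp]: "length (affmap d M v x) = d - 1"
  unfolding affmap_def by simp

lemma affmap_eq_iff_linmap_eq: "affmap d M v x = affmap d M v y \<longleftrightarrow> linmap d M x = linmap d M y"
  unfolding affmap_def by (simp add: list_eq_iff_nth_eq)

lemma linmap_zero: "linmap d M (replicate d 0) = replicate (d - 1) 0"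
  unfolding affmap_def by (simp add: list_eq_iff_nth_eq)

lemma congr_mod_affmap:
  assumes "length b' = d" "congr_mod b' y1 y2"
  shows "congr_mod (linmap d M b') (affmap d M v y1) (affmap d M v y2)"
proof -
  obtain k where k: "\<forall>i<d. y1 ! i - y2 ! i = k * b' ! i"
    using assms unfolding congr_mod_def by auto
  have "affmap d M v y1 ! j - affmap d M v y2 ! j = k * linmap d M b' ! j" if "j < d - 1" for j
  proof -
    have "affmap d M v y1 ! j - affmap d M v y2 ! j = (\<Sum>i<d. M j i * (y1 ! i - y2 ! i))"
      using that unfolding affmap_def by (simp add: sum_subtractf algebra_simps)
    also have "\<dots> = (\<Sum>i<d. k * (M j i * b' ! i))"
      using k by (intro sum.cong) (auto simp: algebra_simps)
    also have "\<dots> = k * linmap d M b' ! j"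
      using that unfolding affmap_def by (simp add: sum_distrib_left)
    finally show ?thesis .
  qed
  then show ?thesis
    unfolding congr_mod_def by auto
qed

locale rational_line_fibres =
  fixes d :: nat and M :: "nat \<Rightarrow> nat \<Rightarrow> int" and v :: "nat \<Rightarrow> int" and b :: "int list"
  assumes length_b: "length b = d"
    and affmap_eq_iff: "\<And>x1 x2. x1 \<in> intvecs d \<Longrightarrow> x2 \<in> intvecs d \<Longrightarrow>
      affmap d M v x1 = affmap d M v x2 \<longleftrightarrow>
      (\<exists>k::rat. \<forall>i<d. of_int (x1 ! i - x2 ! i) = k * of_int (b ! i))"
begin

lemma fibre_coord_dvd:
  assumes "x1 \<in> intvecs d" "x2 \<in> intvecs d" "affmap d M v x1 = affmap d M v x2" "i < d"
  shows "b ! i div Gcd (set b) dvd x1 ! i - x2 ! i"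
proof -
  obtain k :: rat where "\<forall>j<d. of_int (x1 ! j - x2 ! j) = k * of_int (b ! j)"
    using affmap_eq_iff assms(1-3) by blast
  then obtain t where "\<And>j. j < d \<Longrightarrow> x1 ! j - x2 ! j = t * (b ! j div Gcd (set b))"
    using int_vector_on_rat_line[of b "\<lambda>j. x1 ! j - x2 ! j" k] length_b by metis
  then show ?thesis
    using assms(4) by simp
qed

lemma fibre_coord_inj:
  assumes "x1 \<in> intvecs d" "x2 \<in> intvecs d" "affmap d M v x1 = affmap d M v x2"
    and "i < d" "b ! i \<noteq> 0" "x1 ! i = x2 ! i"
  shows "x1 = x2"
proof -
  obtain k :: rat where k: "\<forall>j<d. of_int (x1 ! j - x2 ! j) = k * of_int (b ! j)"
    using affmap_eq_iff assms(1-3) by blast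
  then have "k = 0"
    using assms(4-6) by (metis diff_self mult_eq_0_iff of_int_0 of_int_eq_0_iff)
  then show ?thesis
    using k assms(1,2) by (simp add: intvecs_def list_eq_iff_nth_eq)
qed

lemma card_fibre_le:
  assumes "finite W" "W \<subseteq> intvecs d" "\<And>x y. x \<in> W \<Longrightarrow> y \<in> W \<Longrightarrow> affmap d M v x = affmap d M v y"
    and "i < d" "b ! i \<noteq> 0"
    and "\<And>x. x \<in> W \<Longrightarrow> lo \<le> of_int (x ! i) \<and> of_int (x ! i) \<le> hi" "lo \<le> hi"
  shows "real (card W) \<le> (hi - lo) / of_int \<bar>b ! i div Gcd (set b)\<bar> + 1"
proof -
  have "inj_on (\<lambda>x. x ! i) W"
  proof (rule inj_onI)
    fix x y
    assume "x \<in> W" "y \<in> W" "x ! i = y ! i"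
    then show "x = y"
      using assms(2) by (intro fibre_coord_inj[OF _ _ assms(3) assms(4,5)]) auto
  qed
  moreover have "real (card ((\<lambda>x. x ! i) ` W)) \<le> (hi - lo) / of_int \<bar>b ! i div Gcd (set b)\<bar> + 1"
  proof (rule card_le_of_pairwise_dvd)
    have "b ! i div Gcd (set b) \<noteq> 0"
      using assms(4,5) length_b by (intro Gcd_div_nonzero) auto
    then show "0 < \<bar>b ! i div Gcd (set b)\<bar>"
      by simp
    show "\<bar>b ! i div Gcd (set b)\<bar> dvd x - y" if "x \<in> (\<lambda>x. x ! i) ` W" "y \<in> (\<lambda>x. x ! i) ` W" for x y
    proof -
      obtain x' y' where "x' \<in> W" "y' \<in> W" and xy: "x = x' ! i" "y = y' ! i"
        using \<open>x \<in> (\<lambda>x. x ! i) ` W\<close> \<open>y \<in> (\<lambda>x. x ! i) ` W\<close> by blast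
      then have "b ! i div Gcd (set b) dvd x' ! i - y' ! i"
        using assms(2) by (intro fibre_coord_dvd[OF _ _ assms(3) assms(4)]) auto
      then show ?thesis
        unfolding xy abs_dvd_iff .
    qed
    show "finite ((\<lambda>x. x ! i) ` W)"
      using assms(1) by (rule finite_imageI)
    show "lo \<le> of_int x \<and> of_int x \<le> hi" if "x \<in> (\<lambda>x. x ! i) ` W" for x
      using that assms(6) by blast
  qed (rule assms(7))
  ultimately show ?thesis
    by (simp add: card_image)
qed

lemma affmap_inj_on_congr_class:
  assumes "y1 \<in> intvecs d" "y2 \<in> intvecs d" "b' \<in> intvecs d" "linmap d M b' \<noteq> replicate (d - 1) 0"
    and "congr_mod b' y1 y2" "affmap d M v y1 = affmap d M v y2"
  shows "y1 = y2"
proof -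
  obtain k :: int where k: "\<forall>j<d. y1 ! j - y2 ! j = k * b' ! j"
    using assms(3,5) unfolding congr_mod_def intvecs_def by auto
  obtain q :: rat where q: "\<forall>j<d. of_int (y1 ! j - y2 ! j) = q * of_int (b ! j)"
    using affmap_eq_iff assms(1,2,6) by blast
  show ?thesis
  proof (cases "k = 0")
    case True
    then show ?thesis
      using k assms(1,2) by (simp add: intvecs_def list_eq_iff_nth_eq)
  next
    case False
    \<comment> \<open>then b' is a rational multiple of b, so b' lies in the fibre of 0\<close>
    have "\<exists>r::rat. \<forall>j<d. of_int (b' ! j - replicate d 0 ! j) = r * of_int (b ! j)"
    proof (intro exI[of _ "q / of_int k"] allI impI)
      fix j
      assume "j < d"
      then have "of_int k * of_int (b' ! j) = q * (of_int (b ! j) :: rat)"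
        using k q by (metis of_int_mult)
      then show "of_int (b' ! j - replicate d 0 ! j) = q / of_int k * of_int (b ! j)"
        using False \<open>j < d\<close> by (simp add: field_simps)
    qed
    then have "affmap d M v b' = affmap d M v (replicate d 0)"
      using affmap_eq_iff assms(3) by (simp add: intvecs_def)
    then show ?thesis
      using assms(4) by (simp add: affmap_eq_iff_linmap_eq linmap_zero)
  qed
qed

lemma card_linmap_fibre_le:
  fixes T :: real
  assumes "finite B" "B \<subseteq> intvecs d" "\<And>b'. b' \<in> B \<Longrightarrow> \<bar>of_int (b' ! i)\<bar> \<le> T"
    and "i < d" "b ! i \<noteq> 0" "0 \<le> T"
  shows "real (card {b' \<in> B. linmap d M b' = c}) \<le> 2 * T / of_int \<bar>b ! i div Gcd (set b)\<bar> + 1"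
proof -
  have bounds: "- T \<le> of_int (x ! i) \<and> of_int (x ! i) \<le> T" if "x \<in> B" for x
    using assms(3)[OF that] by linarith
  have fibre: "affmap d M v x = affmap d M v y"
    if "x \<in> {b' \<in> B. linmap d M b' = c}" "y \<in> {b' \<in> B. linmap d M b' = c}" for x y
    using that affmap_eq_iff_linmap_eq by (metis (mono_tags, lifting) mem_Collect_eq)
  have "real (card {b' \<in> B. linmap d M b' = c}) \<le> (T - - T) / of_int \<bar>b ! i div Gcd (set b)\<bar> + 1"
    by (rule card_fibre_le[OF _ _ fibre assms(4,5)]) (use assms(1,2,6) bounds in auto)
  then show ?thesis
    by simp
qed

lemma card_parallel_le:
  fixes T :: real
  assumes "finite B" "B \<subseteq> intvecs d - {replicate d 0}" "\<And>b'. b' \<in> B \<Longrightarrow> \<bar>of_int (b' ! i)\<bar> \<le> T"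
    and "i < d" "b ! i \<noteq> 0" "0 \<le> T"
  shows "real (card {b' \<in> B. linmap d M b' = replicate (d - 1) 0}) \<le> 2 * T / of_int \<bar>b ! i div Gcd (set b)\<bar>"
proof -
  \<comment> \<open>the zero vector lies in the same fibre and absorbs the \<open>+ 1\<close>\<close>
  define P where "P = insert (replicate d 0) B"
  have "real (card {b' \<in> P. linmap d M b' = replicate (d - 1) 0}) \<le> 2 * T / of_int \<bar>b ! i div Gcd (set b)\<bar> + 1"
    by (rule card_linmap_fibre_le) (use assms in \<open>auto simp: P_def intvecs_def\<close>)
  moreover have "{b' \<in> P. linmap d M b' = replicate (d - 1) 0}
      = insert (replicate d 0) {b' \<in> B. linmap d M b' = replicate (d - 1) 0}"
    by (auto simp: P_def linmap_zero)
  moreover have "replicate d 0 \<notin> B"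
    using assms(2) by blast
  ultimately show ?thesis
    using assms(1) by simp
qed

lemma sum_card_inter_U_le:
  fixes T n :: real
  assumes "finite B" "B \<subseteq> intvecs d - {replicate d 0}" "\<And>b'. b' \<in> B \<Longrightarrow> \<bar>of_int (b' ! i)\<bar> \<le> T"
    and "finite X" "X \<subseteq> intvecs d" "A \<subseteq> X" "\<And>x. x \<in> A \<Longrightarrow> 0 \<le> x ! i \<and> of_int (x ! i) \<le> n"
    and "i < d" "b ! i \<noteq> 0" "0 < s" "1 \<le> s'" "0 \<le> T" "0 \<le> n"
  defines "a \<equiv> real_of_int \<bar>b ! i div Gcd (set b)\<bar>"
  shows "(\<Sum>b'\<in>B. real (card (A \<inter> U X b' s)))
    \<le> 2 * T / a * real (card A) + (real s' - 1) / real s * (\<Sum>b'\<in>B. real (card (U X b' s)))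
      + (n / a + 1) * (2 * T / a + 1) *
        (\<Sum>c\<in>linmap d M ` B - {replicate (d - 1) 0}. real (card (U (affmap d M v ` A) c s')))"
proof -
  have "finite A"
    using assms(4,6) finite_subset by blast
  have fibres: "real (card {y \<in> A. affmap d M v y = z}) \<le> n / a + 1" for z
  proof -
    have "real (card {y \<in> A. affmap d M v y = z}) \<le> (n - 0) / a + 1"
      unfolding a_def using \<open>finite A\<close> assms(5-9,13) by (intro card_fibre_le) auto
    then show ?thesis
      by simp
  qed
  have "(\<Sum>b'\<in>B. real (card (A \<inter> U X b' s)))
    \<le> real (card {b' \<in> B. linmap d M b' = replicate (d - 1) 0}) * real (card A)
      + (real s' - 1) / real s * (\<Sum>b'\<in>B. real (card (U X b' s)))
      + (n / a + 1) * (2 * T / a + 1) *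
        (\<Sum>c\<in>linmap d M ` B - {replicate (d - 1) 0}. real (card (U (affmap d M v ` A) c s')))"
  proof (rule sum_card_inter_le[OF assms(1) \<open>finite A\<close>])
    fix b'
    assume b': "b' \<in> B" "linmap d M b' \<noteq> replicate (d - 1) 0"
    then have "b' \<in> intvecs d"
      using assms(2) by auto
    show "real (card (A \<inter> U X b' s)) \<le> (real s' - 1) / real s * real (card (U X b' s))
      + (n / a + 1) * real (card (U (affmap d M v ` A) (linmap d M b') s'))"
    proof (rule card_inter_U_le[OF assms(4,6,10,11) _ _ fibres])
      show "congr_mod (linmap d M b') (affmap d M v y1) (affmap d M v y2)" if "congr_mod b' y1 y2" for y1 y2
        using congr_mod_affmap that \<open>b' \<in> intvecs d\<close> by (simp add: intvecs_def)
      show "y1 = y2" if "y1 \<in> X" "y2 \<in> X" "congr_mod b' y1 y2" "affmap d M v y1 = affmap d M v y2" for y1 y2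
        using affmap_inj_on_congr_class that assms(5) b'(2) \<open>b' \<in> intvecs d\<close> by blast
    qed
  next
    show "real (card {b' \<in> B. linmap d M b' = c}) \<le> 2 * T / a + 1" for c
      unfolding a_def using assms(1-3,8,9,12) by (intro card_linmap_fibre_le) auto
  qed (use assms(11,13) in \<open>auto simp: a_def\<close>)
  moreover have "real (card {b' \<in> B. linmap d M b' = replicate (d - 1) 0}) * real (card A)
      \<le> 2 * T / a * real (card A)"
    unfolding a_def using card_parallel_le[OF assms(1-3,8,9,12)] of_nat_0_le_iff by (rule mult_right_mono)
  ultimately show ?thesis
    by linarith
qed

end

lemma coefficient_bounds:
  fixes s lam n a :: real
  assumes "2 \<le> s" "0 < lam" "lam < 1 / (s - 1)" "0 < n" "lam * n \<le> a"
  shows "2 * (n / (s - 1)) / a \<le> 4 / (s * lam)"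
    and "(n / a + 1) * (2 * (n / (s - 1)) / a + 1) \<le> 12 / (s * lam ^ 2)"
proof -
  define q where "q = 1 / (lam * (s - 1))"
  have "0 < a"
    using assms(2,4,5) by (smt (verit) mult_pos_pos)
  then have "n / a \<le> 1 / lam"
    using assms(2,5) by (simp add: field_simps)
  have "lam * (s - 1) < 1"
    using assms(1,3) by (simp add: field_simps)
  then have "1 \<le> q"
    using assms(1,2) by (simp add: q_def field_simps)
  have "lam \<le> 1"
    using mult_left_mono[of 1 "s - 1" lam] \<open>lam * (s - 1) < 1\<close> assms(1,2) by linarith
  have step: "2 * (n / (s - 1)) / a \<le> 2 * q"
  proof -
    have "2 * (n / (s - 1)) / a = 2 * (n / a) / (s - 1)"
      by simp
    also have "\<dots> \<le> 2 * (1 / lam) / (s - 1)"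
      using \<open>n / a \<le> 1 / lam\<close> assms(1) by (intro divide_right_mono) auto
    finally show ?thesis
      by (simp add: q_def)
  qed
  \<comment> \<open>both final estimates lose the factor \<open>s / (s - 1) \<le> 2\<close>\<close>
  have s_half: "s \<le> 2 * (s - 1)"
    using assms(1) by simp
  have "2 * q \<le> 4 / (s * lam)"
    using s_half assms(1,2) by (simp add: q_def field_simps)
  then show "2 * (n / (s - 1)) / a \<le> 4 / (s * lam)"
    using step by linarith
  have "n / a + 1 \<le> 2 / lam"
    using \<open>n / a \<le> 1 / lam\<close> \<open>lam \<le> 1\<close> assms(2) by (simp add: field_simps)
  moreover have "2 * (n / (s - 1)) / a + 1 \<le> 3 * q"
    using step \<open>1 \<le> q\<close> by linarith
  moreover have "0 \<le> 2 * (n / (s - 1)) / a + 1"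
    using \<open>0 < a\<close> assms(1,4) by simp
  ultimately have "(n / a + 1) * (2 * (n / (s - 1)) / a + 1) \<le> 2 / lam * (3 * q)"
    using assms(2) by (intro mult_mono) auto
  also have "\<dots> \<le> 12 / (s * lam ^ 2)"
    using s_half assms(1,2) by (simp add: q_def field_simps power2_eq_square)
  finally show "(n / a + 1) * (2 * (n / (s - 1)) / a + 1) \<le> 12 / (s * lam ^ 2)" .
qed

lemma exists_coord_ge_Max:
  fixes lam :: real and N b :: "int list"
  assumes "0 < d" "length b = d" "\<forall>i<d. 0 < N ! i" "0 < lam"
    and "lam \<le> Max ((\<lambda>i. \<bar>real_of_int (b ! i)\<bar> / (real_of_int (Gcd (set b)) * real_of_int (N ! i))) ` {..<d})"
  obtains i where "i < d" "b ! i \<noteq> 0" "lam * of_int (N ! i) \<le> of_int \<bar>b ! i div Gcd (set b)\<bar>"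
proof -
  let ?F = "\<lambda>i. \<bar>real_of_int (b ! i)\<bar> / (real_of_int (Gcd (set b)) * real_of_int (N ! i))"
  obtain i where i: "i < d" "Max (?F ` {..<d}) = ?F i"
    using Max_in[of "?F ` {..<d}"] assms(1) by fastforce
  have "Gcd (set b) dvd b ! i"
    using i(1) assms(2) by (simp add: Gcd_dvd)
  then have "\<bar>real_of_int (b ! i)\<bar> / real_of_int (Gcd (set b)) = of_int \<bar>b ! i div Gcd (set b)\<bar>"
    by (simp add: real_of_int_div)
  moreover have "lam \<le> ?F i"
    using assms(5) i(2) by simp
  ultimately have "lam \<le> of_int \<bar>b ! i div Gcd (set b)\<bar> / of_int (N ! i)"
    by (metis divide_divide_eq_left)
  then have "lam * of_int (N ! i) \<le> of_int \<bar>b ! i div Gcd (set b)\<bar>"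
    using i(1) assms(3) by (simp add: field_simps)
  moreover have "0 < lam * of_int (N ! i)"
    using i(1) assms(3,4) by simp
  ultimately have "b ! i \<noteq> 0"
    by auto
  then show ?thesis
    using that i(1) \<open>lam * of_int (N ! i) \<le> of_int \<bar>b ! i div Gcd (set b)\<bar>\<close> by blast
qed

lemma finite_intvecs_box: "finite {x \<in> intvecs d. \<forall>i<d. lo \<le> x ! i \<and> x ! i \<le> N ! i}"
proof -
  define m where "m = Max ((!) N ` {..<d})"
  have "{x \<in> intvecs d. \<forall>i<d. lo \<le> x ! i \<and> x ! i \<le> N ! i} \<subseteq> {xs. set xs \<subseteq> {lo..m} \<and> length xs = d}"
  proof -
    have "N ! i \<le> m" if "i < d" for i
      unfolding m_def using that by (intro Max_ge) auto
    then show ?thesis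
      by (fastforce simp: intvecs_def in_set_conv_nth intro: order_trans)
  qed
  moreover have "finite {xs. set xs \<subseteq> {lo..m} \<and> length xs = d}"
    by (rule finite_lists_length_eq) simp
  ultimately show ?thesis
    by (rule finite_subset)
qed

lemma (in rational_line_fibres) sum_card_inter_U_le_box:
  fixes s s' :: nat and N :: "int list" and X B :: "int list set"
  assumes "finite B" "2 \<le> s" "1 \<le> s'" "i < d" "b ! i \<noteq> 0" "0 < N ! i"
    and hX: "X \<subseteq> {x \<in> intvecs d. \<forall>i<d. 1 \<le> x ! i \<and> x ! i \<le> N ! i}"
    and hB: "B \<subseteq> {c \<in> intvecs d. c \<noteq> replicate d 0 \<and>
               (\<forall>i<d. \<bar>real_of_int (c ! i)\<bar> \<le> real_of_int (N ! i) / (real s - 1))}"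
  defines "n \<equiv> real_of_int (N ! i)" and "a \<equiv> real_of_int \<bar>b ! i div Gcd (set b)\<bar>"
  shows "(\<Sum>b'\<in>B. real (card (U X b s \<inter> U X b' s)))
    \<le> 2 * (n / (real s - 1)) / a * real (card (U X b s))
      + (real s' - 1) / real s * (\<Sum>b'\<in>B. real (card (U X b' s)))
      + (n / a + 1) * (2 * (n / (real s - 1)) / a + 1) *
        (\<Sum>c\<in>linmap d M ` B - {replicate (d - 1) 0}. real (card (U (affmap d M v ` U X b s) c s')))"
  unfolding a_def
proof (rule sum_card_inter_U_le[OF assms(1)])
  show "finite X"
    using hX finite_intvecs_box finite_subset by blast
  show "U X b s \<subseteq> X"
    by (auto simp: U_def)
  then show "0 \<le> x ! i \<and> of_int (x ! i) \<le> n" if "x \<in> U X b s" for x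
    using that hX \<open>i < d\<close> by (force simp: n_def)
  show "\<bar>of_int (b' ! i)\<bar> \<le> n / (real s - 1)" if "b' \<in> B" for b'
    using hB that \<open>i < d\<close> unfolding n_def by blast
  show "0 \<le> n / (real s - 1)"
    using assms(2,6) by (simp add: n_def)
qed (use hB hX assms(2-6) in \<open>auto simp: n_def\<close>)

lemma (in rational_line_fibres) sum_card_inter_U_bound:
  fixes s s' :: nat and N :: "int list" and X B :: "int list set" and lam0 :: real
  assumes "finite B" "0 < d" "2 \<le> s" "1 \<le> s'"
    and hNs: "\<forall>i<d. N ! i > int s"
    and hX: "X \<subseteq> {x \<in> intvecs d. \<forall>i<d. 1 \<le> x ! i \<and> x ! i \<le> N ! i}"
    and hlam: "0 < lam0" "lam0 < 1 / (real s - 1)"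
    and hB: "B \<subseteq> {c \<in> intvecs d. c \<noteq> replicate d 0 \<and>
               (\<forall>i<d. \<bar>real_of_int (c ! i)\<bar> \<le> real_of_int (N ! i) / (real s - 1))}"
    and hb_lam: "lam0 \<le> Max ((\<lambda>i. \<bar>real_of_int (b ! i)\<bar> /
                   (real_of_int (Gcd (set b)) * real_of_int (N ! i))) ` {..<d})"
  shows "(\<Sum>b'\<in>B. real (card (U X b s \<inter> U X b' s)))
    \<le> 4 / (real s * lam0) * real (card (U X b s))
      + (real s' - 1) / real s * (\<Sum>b'\<in>B. real (card (U X b' s)))
      + 12 / (real s * lam0 ^ 2) *
        (\<Sum>c\<in>linmap d M ` B - {replicate (d - 1) 0}. real (card (U (affmap d M v ` U X b s) c s')))"
proof -
  have N_pos: "\<forall>i<d. 0 < N ! i"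
    using hNs of_nat_0_le_iff by (metis order_le_less_trans)
  then obtain i where "i < d" "b ! i \<noteq> 0"
    and lam_le: "lam0 * of_int (N ! i) \<le> of_int \<bar>b ! i div Gcd (set b)\<bar>"
    using exists_coord_ge_Max[OF assms(2) length_b _ hlam(1) hb_lam] by blast
  define n where "n = real_of_int (N ! i)"
  define a where "a = real_of_int \<bar>b ! i div Gcd (set b)\<bar>"
  have "0 < n"
    using N_pos \<open>i < d\<close> by (simp add: n_def)
  have "2 \<le> real s"
    using assms(3) by simp
  note coefficients = coefficient_bounds[OF this hlam \<open>0 < n\<close> lam_le[folded n_def a_def]]
  have "2 * (n / (real s - 1)) / a * real (card (U X b s)) \<le> 4 / (real s * lam0) * real (card (U X b s))"
    using coefficients(1) by (rule mult_right_mono) simp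
  moreover have "(n / a + 1) * (2 * (n / (real s - 1)) / a + 1) *
        (\<Sum>c\<in>linmap d M ` B - {replicate (d - 1) 0}. real (card (U (affmap d M v ` U X b s) c s')))
      \<le> 12 / (real s * lam0 ^ 2) *
        (\<Sum>c\<in>linmap d M ` B - {replicate (d - 1) 0}. real (card (U (affmap d M v ` U X b s) c s')))"
    using coefficients(2) by (rule mult_right_mono) (simp add: sum_nonneg)
  ultimately show ?thesis
    using sum_card_inter_U_le_box[OF assms(1,3,4) \<open>i < d\<close> \<open>b ! i \<noteq> 0\<close> _ hX hB]
      N_pos \<open>i < d\<close> unfolding n_def a_def by fastforce
qed

lemma ennreal_le_plus_mult_infsum:
  fixes w :: "'a \<Rightarrow> nat"
  assumes "L \<le> p + q + r * (\<Sum>c\<in>F. real (w c))" "0 \<le> p" "0 \<le> q" "0 \<le> r" "finite F" "F \<subseteq> S"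
  shows "ennreal L \<le> ennreal p + ennreal q + ennreal r * infsum (\<lambda>c. ennreal (real (w c))) S"
proof -
  have "ennreal L \<le> ennreal (p + q + r * (\<Sum>c\<in>F. real (w c)))"
    using assms(1) by (rule ennreal_leI)
  also have "\<dots> = ennreal p + ennreal q + ennreal r * (\<Sum>c\<in>F. ennreal (real (w c)))"
    using assms(2-4) by (simp add: ennreal_mult sum_nonneg)
  also have "(\<Sum>c\<in>F. ennreal (real (w c))) = infsum (\<lambda>c. ennreal (real (w c))) F"
    using assms(5) by simp
  also have "\<dots> \<le> infsum (\<lambda>c. ennreal (real (w c))) S"
    using assms(6) by (intro infsum_mono_neutral) (auto intro: nonneg_summable_on_complete)
  finally show ?thesis
    by (simp add: add_left_mono mult_left_mono)
qed

theorem lemma4p9: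
  fixes d s s' :: nat and N :: "int list" and X B :: "int list set"
    and lam0 :: real and b :: "int list"
    and M :: "nat \<Rightarrow> nat \<Rightarrow> int" and v :: "nat \<Rightarrow> int"
  assumes hd: "d \<ge> 2"
    and hN: "length N = d"
    and hs: "s \<ge> 2"
    and hNs: "\<forall>i<d. N ! i > int s"
    and hX: "X \<subseteq> {x \<in> intvecs d. \<forall>i<d. 1 \<le> x ! i \<and> x ! i \<le> N ! i}"
    and hlam: "0 < lam0" "lam0 < 1 / (real s - 1)"
    and hB: "B \<subseteq> {c \<in> intvecs d. c \<noteq> replicate d 0 \<and>
               (\<forall>i<d. \<bar>real_of_int (c ! i)\<bar> \<le> real_of_int (N ! i) / (real s - 1))}"
    and hBlam: "\<forall>c\<in>B. lam0 \<le> Max ((\<lambda>i. \<bar>real_of_int (c ! i)\<bar> /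
                   (real_of_int (Gcd (set c)) * real_of_int (N ! i))) ` {..<d})"
    and hb: "b \<in> B"
    and hf: "\<forall>x1\<in>intvecs d. \<forall>x2\<in>intvecs d.
               affmap d M v x1 = affmap d M v x2 \<longleftrightarrow>
               (\<exists>k::rat. \<forall>i<d. of_int (x1 ! i - x2 ! i) = k * of_int (b ! i))"
    and hs': "1 \<le> s'" "s' \<le> s"
  shows "ennreal (\<Sum>b'\<in>B. real (card (U X b s \<inter> U X b' s)))
    \<le> ennreal (4 / (real s * lam0) * real (card (U X b s)))
      + ennreal ((real s' - 1) / real s * (\<Sum>b'\<in>B. real (card (U X b' s))))
      + ennreal (12 / (real s * lam0 ^ 2)) *
        infsum (\<lambda>c. ennreal (real (card (U (affmap d M v ` U X b s) c s'))))
          {c \<in> intvecs (d - 1). c \<noteq> replicate (d - 1) 0}"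
proof (cases "finite B")
  case False
  then show ?thesis
    by simp
next
  case True
  interpret rational_line_fibres d M v b
    using hB hb hf by unfold_locales (auto simp: intvecs_def)
  have "(\<Sum>b'\<in>B. real (card (U X b s \<inter> U X b' s)))
    \<le> 4 / (real s * lam0) * real (card (U X b s))
      + (real s' - 1) / real s * (\<Sum>b'\<in>B. real (card (U X b' s)))
      + 12 / (real s * lam0 ^ 2) *
        (\<Sum>c\<in>linmap d M ` B - {replicate (d - 1) 0}. real (card (U (affmap d M v ` U X b s) c s')))"
    by (rule sum_card_inter_U_bound[OF True _ hs hs'(1) hNs hX hlam hB]) (use hBlam hb hd in auto)
  then show ?thesis
  proof (rule ennreal_le_plus_mult_infsum)
    show "0 \<le> 4 / (real s * lam0) * real (card (U X b s))"
      using hlam by simp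
    show "0 \<le> (real s' - 1) / real s * (\<Sum>b'\<in>B. real (card (U X b' s)))"
      using hs' by (simp add: sum_nonneg)
    show "finite (linmap d M ` B - {replicate (d - 1) 0})"
      using True by simp
    show "linmap d M ` B - {replicate (d - 1) 0} \<subseteq> {c \<in> intvecs (d - 1). c \<noteq> replicate (d - 1) 0}"
      by (auto simp: intvecs_def)
  qed simp
qed

end
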